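(* Let $\mathcal{C}$ be a finite set of classes and let $\ell_\star, \ell_a, \ell_b$ be $\mathcal{C}$-valued random variables on a common probability space, where $\ell_\star$ is the oracle label and $\ell_a, \ell_b$ are two predicted labels. Assume that for every $\mathcal{C}$-valued random variable $\ell_\times$ on this space with $\ell_\times \ne \ell_\star$ almost surely (an incorrect label), $$\mathbb{P}(\ell_b = \ell_\star \mid \ell_a \ne \ell_\star) \ge \mathbb{P}(\ell_b = \ell_\times \mid \ell_a \ne \ell_\star).$$ Then $\mathcal{L} := \mathbb{P}(\ell_a = \ell_b) \le \mathbb{P}(\ell_b = \ell_\star)$.
   Context: Conditional probabilities given an event of probability zero are taken to be $0$. *)

theory Defs
  imports "HOL-Probability.Probability"
begin

definition cond_prob :: "'a measure \<Rightarrow> 'a set \<Rightarrow> 'a set \<Rightarrow> real" where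
  "cond_prob M A B = (if measure M B = 0 then 0 else measure M (A \<inter> B) / measure M B)"

end

theory Submission
  imports Defs
begin

text \<open>
  Split the sample space along the error event \<open>E = {l_a \<noteq> l_star}\<close>. Off \<open>E\<close> the events
  \<open>{l_a = l_b}\<close> and \<open>{l_b = l_star}\<close> coincide. On \<open>E\<close>, the label that equals \<open>l_a\<close> on \<open>E\<close> and
  some class other than \<open>l_star\<close> off \<open>E\<close> is incorrect everywhere, so the hypothesis applied to
  it compares \<open>P(l_a = l_b \<and> E)\<close> with \<open>P(l_b = l_star \<and> E)\<close>.
\<close>

lemma sets_Collect_eq_count_space:
  assumes "countable C" "f \<in> measurable M (count_space C)" "g \<in> measurable M (count_space C)"
  shows "{\<omega>\<in>space M. f \<omega> = g \<omega>} \<in> sets M"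
proof -
  have "{\<omega>\<in>space M. f \<omega> = g \<omega>} = (\<Union>c\<in>C. f -` {c} \<inter> space M \<inter> (g -` {c} \<inter> space M))"
    using measurable_space[OF assms(2)] by force
  also have "\<dots> \<in> sets M"
    using assms by (intro sets.countable_UN' sets.Int measurable_sets) auto
  finally show ?thesis .
qed

lemma (in finite_measure) measure_Int_le_of_cond_prob_le:
  assumes "B \<in> sets M" "cond_prob M S B \<le> cond_prob M T B"
  shows "measure M (S \<inter> B) \<le> measure M (T \<inter> B)"
proof (cases "measure M B = 0")
  case True
  then have "measure M (S \<inter> B) \<le> 0"
    using finite_measure_mono[OF Int_lower2 assms(1), of S] by simp
  then show ?thesis
    using measure_nonneg order_trans by blast
next
  case False
  then have "measure M B > 0"
    using measure_nonneg[of M B] by linarith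
  then show ?thesis
    using assms(2) False by (simp add: cond_prob_def divide_le_cancel)
qed

lemma (in finite_measure) measure_le_of_Int_le_Diff_eq:
  assumes "A \<in> sets M" "S \<in> sets M" "T \<in> sets M"
    and "measure M (S \<inter> A) \<le> measure M (T \<inter> A)" "S - A = T - A"
  shows "measure M S \<le> measure M T"
  using assms finite_measure_Diff'[OF assms(2,1)] finite_measure_Diff'[OF assms(3,1)] by simp

lemma exists_incorrect_label_extending:
  assumes l_star: "l_star \<in> measurable M (count_space C)"
    and l: "l \<in> measurable M (count_space C)"
    and "{\<omega>\<in>space M. l \<omega> \<noteq> l_star \<omega>} \<in> sets M"
    and "\<omega>\<^sub>0 \<in> space M" "l \<omega>\<^sub>0 \<noteq> l_star \<omega>\<^sub>0"
  obtains l_x where "l_x \<in> measurable M (count_space C)"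
    "\<And>\<omega>. \<omega> \<in> space M \<Longrightarrow> l_x \<omega> \<noteq> l_star \<omega>"
    "\<And>\<omega>. \<omega> \<in> space M \<Longrightarrow> l \<omega> \<noteq> l_star \<omega> \<Longrightarrow> l_x \<omega> = l \<omega>"
proof -
  define c d where "c = l \<omega>\<^sub>0" and "d = l_star \<omega>\<^sub>0"
  have "c \<in> C" "d \<in> C" "c \<noteq> d"
    using assms(4,5) l l_star by (auto simp: c_def d_def dest: measurable_space)
  define other where "other x = (if x = c then d else c)" for x
  have "other \<in> measurable (count_space C) (count_space C)"
    using \<open>c \<in> C\<close> \<open>d \<in> C\<close> by (auto simp: other_def measurable_count_space_eq1)
  then have "(\<lambda>\<omega>. if l \<omega> \<noteq> l_star \<omega> then l \<omega> else other (l_star \<omega>)) \<in> measurable M (count_space C)"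
    using assms(3) by (intro measurable_If l measurable_compose[OF l_star]) simp
  then show thesis
    by (rule that) (use \<open>c \<noteq> d\<close> in \<open>auto simp: other_def\<close>)
qed

theorem theorem3:
  fixes M :: "'a measure" and C :: "'c set"
    and l_star l_a l_b :: "'a \<Rightarrow> 'c"
  assumes "prob_space M"
    and "finite C"
    and "l_star \<in> measurable M (count_space C)"
    and "l_a \<in> measurable M (count_space C)"
    and "l_b \<in> measurable M (count_space C)"
    and "\<And>l_x. l_x \<in> measurable M (count_space C) \<Longrightarrow>
           (AE \<omega> in M. l_x \<omega> \<noteq> l_star \<omega>) \<Longrightarrow>
           cond_prob M {\<omega>\<in>space M. l_b \<omega> = l_star \<omega>} {\<omega>\<in>space M. l_a \<omega> \<noteq> l_star \<omega>}
           \<ge> cond_prob M {\<omega>\<in>space M. l_b \<omega> = l_x \<omega>} {\<omega>\<in>space M. l_a \<omega> \<noteq> l_star \<omega>}"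
  shows "measure M {\<omega>\<in>space M. l_a \<omega> = l_b \<omega>} \<le> measure M {\<omega>\<in>space M. l_b \<omega> = l_star \<omega>}"
proof -
  interpret prob_space M by fact
  define Err where "Err = {\<omega>\<in>space M. l_a \<omega> \<noteq> l_star \<omega>}"
  define Agree where "Agree = {\<omega>\<in>space M. l_a \<omega> = l_b \<omega>}"
  define Correct where "Correct = {\<omega>\<in>space M. l_b \<omega> = l_star \<omega>}"
  note eq_set = sets_Collect_eq_count_space[OF countable_finite[OF assms(2)]]
  have "Err = space M - {\<omega>\<in>space M. l_a \<omega> = l_star \<omega>}"
    by (auto simp: Err_def)
  then have sets: "Err \<in> sets M" "Agree \<in> sets M" "Correct \<in> sets M"
    unfolding Agree_def Correct_def
    using eq_set[OF assms(4,3)] eq_set[OF assms(4,5)] eq_set[OF assms(5,3)] by simp_all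
  have "measure M (Agree \<inter> Err) \<le> measure M (Correct \<inter> Err)"
  proof (cases "Err = {}")
    case False
    then obtain \<omega> where "\<omega> \<in> space M" "l_a \<omega> \<noteq> l_star \<omega>"
      by (auto simp: Err_def)
    then obtain l_x where l_x: "l_x \<in> measurable M (count_space C)"
      "\<And>\<omega>. \<omega> \<in> space M \<Longrightarrow> l_x \<omega> \<noteq> l_star \<omega>"
      "\<And>\<omega>. \<omega> \<in> space M \<Longrightarrow> l_a \<omega> \<noteq> l_star \<omega> \<Longrightarrow> l_x \<omega> = l_a \<omega>"
      using exists_incorrect_label_extending[OF assms(3,4) sets(1)[unfolded Err_def]] by blast
    have "cond_prob M {\<omega>\<in>space M. l_b \<omega> = l_x \<omega>} Err \<le> cond_prob M Correct Err"
      using assms(6)[OF l_x(1) AE_I2[OF l_x(2)]] by (simp add: Err_def Correct_def)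
    moreover have "{\<omega>\<in>space M. l_b \<omega> = l_x \<omega>} \<inter> Err = Agree \<inter> Err"
      using l_x(3) by (auto simp: Err_def Agree_def)
    ultimately show ?thesis
      using measure_Int_le_of_cond_prob_le[OF sets(1)] by metis
  qed simp
  moreover have "Agree - Err = Correct - Err"
    by (auto simp: Err_def Agree_def Correct_def)
  ultimately show ?thesis
    using measure_le_of_Int_le_Diff_eq[OF sets(1-3)] by (simp add: Agree_def Correct_def)
qed

end
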